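(* Let $\mathcal{T}$ be an MPQ-tree of an interval graph $G=(V,E)$ and let $x\neq y$ be vertices with $node(x)=node(y)=P$, where $P$ is a P-node that is not a leaf of $\mathcal{T}$. Then $(x,y)$ is not an interval edge, i.e. $G-(x,y)$ is not an interval graph.
   Context: Graphs are finite and simple; for $G=(V,E)$ and $e\in E$, $G-e=(V,E\setminus\{e\})$. An edge $(x,y)\in E$ of an interval graph $G$ is an interval edge if $G-(x,y)$ is an interval graph. An MPQ-tree of an interval graph $G=(V,E)$, $V=\{1,\dots,n\}$, is a rooted plane tree whose nodes are P-nodes and Q-nodes. Each P-node carries a (possibly empty) set of vertices. A Q-node has $k\ge 3$ ordered positions $1,\dots,k$; position $i$ carries a set $S_i\subseteq V$ (the $i$-th section) and a child subtree $T_i$, which may be empty. Every vertex $v$ is assigned to exactly one node $node(v)$: either $v$ lies in the set of the P-node $node(v)$, or $node(v)$ is a Q-node and $v$ lies exactly in the sections $S_{l(v)},S_{l(v)+1},\dots,S_{r(v)}$ of it, with $l(v)<r(v)$. For a node with child subtrees $T_1,\dots,T_k$, $V_i$ denotes the set of vertices assigned to nodes of $T_i$ ($V_i=\emptyset$ if $T_i$ is empty). The maximal cliques of $G$ are in bijection with the descending paths from the root which at a P-node continue into one of its children (stopping if there is none) and at a Q-node choose a position $i$ and continue into $T_i$ (stopping if $T_i$ is empty); the clique is the union of the sets of the visited P-nodes and the chosen sections. Reading these cliques left to right gives a linear order of the maximal cliques, and the orders obtained this way after arbitrarily permuting children of P-nodes and reversing the positions of Q-nodes are exactly the orders of the maximal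 cliques of $G$ in which the cliques containing any fixed vertex are consecutive. Moreover, for every Q-node with sections $S_1,\dots,S_k$: (a) $V_1\neq\emptyset$ and $V_k\ne\emptyset$; (b) $S_1\subseteq S_2$ and $S_k\subseteq S_{k-1}$; (c) $S_{i-1}\cap S_i\neq\emptyset$ for $2\le i\le k$; (d) $S_{i-1}\neq S_i$ for $2\le i\le k$; (e) $(S_i\cap S_{i+1})\setminus S_1\neq\emptyset$ and $(S_{i-1}\cap S_i)\setminus S_k\neq\emptyset$ for $2\le i\le k-1$; (f) $(S_{i-1}\cup V_{i-1})\setminus S_i\neq\emptyset$ and $(S_i\cup V_i)\setminus S_{i-1}\neq\emptyset$ for $2\le i\le k$; and further (g) no empty P-node has an empty P-node as its parent, (h) no P-node has exactly one child whose root is a P-node, (i) every child subtree of a P-node is nonempty. *)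

theory Defs
  imports Complex_Main "HOL-Library.Multiset"
begin

definition simple_graph :: "'v set \<Rightarrow> 'v set set \<Rightarrow> bool" where
  "simple_graph V E \<longleftrightarrow> finite V \<and> (\<forall>e\<in>E. \<exists>u v. e = {u, v} \<and> u \<in> V \<and> v \<in> V \<and> u \<noteq> v)"

definition interval_graph :: "'v set \<Rightarrow> 'v set set \<Rightarrow> bool" where
  "interval_graph V E \<longleftrightarrow> simple_graph V E \<and>
     (\<exists>a b :: 'v \<Rightarrow> real. (\<forall>v\<in>V. a v \<le> b v) \<and>
        (\<forall>u\<in>V. \<forall>v\<in>V. u \<noteq> v \<longrightarrow> ({u, v} \<in> E \<longleftrightarrow> max (a u) (a v) \<le> min (b u) (b v))))"

definition del_edge :: "'v set set \<Rightarrow> 'v \<Rightarrow> 'v \<Rightarrow> 'v set set" where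
  "del_edge E x y = E - {{x, y}}"

definition interval_edge :: "'v set \<Rightarrow> 'v set set \<Rightarrow> 'v \<Rightarrow> 'v \<Rightarrow> bool" where
  "interval_edge V E x y \<longleftrightarrow> interval_graph V E \<and> {x, y} \<in> E \<and> interval_graph V (del_edge E x y)"

definition is_clique :: "'v set \<Rightarrow> 'v set set \<Rightarrow> 'v set \<Rightarrow> bool" where
  "is_clique V E C \<longleftrightarrow> C \<subseteq> V \<and> (\<forall>u\<in>C. \<forall>v\<in>C. u \<noteq> v \<longrightarrow> {u, v} \<in> E)"

definition max_cliques :: "'v set \<Rightarrow> 'v set set \<Rightarrow> 'v set set" where
  "max_cliques V E = {C. is_clique V E C \<and> (\<forall>C'. is_clique V E C' \<and> C \<subseteq> C' \<longrightarrow> C' = C)}"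

definition consecutive_clique_order :: "'v set \<Rightarrow> 'v set set \<Rightarrow> 'v set list \<Rightarrow> bool" where
  "consecutive_clique_order V E L \<longleftrightarrow> distinct L \<and> set L = max_cliques V E \<and>
     (\<forall>v\<in>V. \<exists>i j. \<forall>k<length L. v \<in> L ! k \<longleftrightarrow> i \<le> k \<and> k \<le> j)"

text \<open>A P-node carries a vertex set and a list of (nonempty) child subtrees; a Q-node
  carries a list of positions, each consisting of a section and a possibly empty
  (None) child subtree.\<close>
datatype 'v mpq = PN "'v set" "'v mpq list" | QN "('v set \<times> 'v mpq option) list"

fun child :: "'v mpq \<Rightarrow> nat \<Rightarrow> 'v mpq option" where
  "child (PN S ts) i = (if i < length ts then Some (ts ! i) else None)"
| "child (QN secs) i = (if i < length secs then snd (secs ! i) else None)"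

fun subtree_at :: "'v mpq \<Rightarrow> nat list \<Rightarrow> 'v mpq option" where
  "subtree_at T [] = Some T"
| "subtree_at T (i # p) = (case child T i of None \<Rightarrow> None | Some t \<Rightarrow> subtree_at t p)"

fun node_verts :: "'v mpq \<Rightarrow> 'v set" where
  "node_verts (PN S ts) = S"
| "node_verts (QN secs) = (\<Union>(S, t)\<in>set secs. S)"

definition tree_verts :: "'v mpq \<Rightarrow> 'v set" where
  "tree_verts T = (\<Union>{node_verts N | p N. subtree_at T p = Some N})"

definition slot_verts :: "'v mpq option \<Rightarrow> 'v set" where
  "slot_verts t = (case t of None \<Rightarrow> {} | Some t' \<Rightarrow> tree_verts t')"

text \<open>The left-to-right orders of maximal cliques (as unions along descending paths)
  obtainable after arbitrarily permuting children of P-nodes and reversing Q-nodes.\<close>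
definition qslot :: "('v mpq \<Rightarrow> 'v set list \<Rightarrow> bool) \<Rightarrow> 'v set \<times> 'v mpq option \<Rightarrow> 'v set list \<Rightarrow> bool" where
  "qslot R st l = (case st of (S, None) \<Rightarrow> l = [S]
                     | (S, Some t) \<Rightarrow> (\<exists>l'. R t l' \<and> l = map ((\<union>) S) l'))"

lemma qslot_mono[mono]: "(\<And>x y. R x y \<longrightarrow> R' x y) \<Longrightarrow> qslot R st l \<longrightarrow> qslot R' st l"
  by (auto simp: qslot_def split: prod.splits option.splits)

inductive is_order :: "'v mpq \<Rightarrow> 'v set list \<Rightarrow> bool" where
  leaf: "is_order (PN S []) [S]"
| pnode: "ts \<noteq> [] \<Longrightarrow> list_all2 is_order ts ls \<Longrightarrow> mset ls' = mset ls \<Longrightarrow>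
           is_order (PN S ts) (map ((\<union>) S) (concat ls'))"
| qnode: "list_all2 (qslot is_order) secs ls \<Longrightarrow> is_order (QN secs) (concat ls)"
| qnode_rev: "list_all2 (qslot is_order) secs ls \<Longrightarrow> is_order (QN secs) (concat (rev ls))"

text \<open>Structural conditions (a)-(f) on a Q-node (0-based indices, k = length secs).\<close>
definition qnode_ok :: "('v set \<times> 'v mpq option) list \<Rightarrow> bool" where
  "qnode_ok secs \<longleftrightarrow>
    (let k = length secs; S = (\<lambda>i. fst (secs ! i)); Vs = (\<lambda>i. slot_verts (snd (secs ! i))) in
      k \<ge> 3 \<and>
      Vs 0 \<noteq> {} \<and> Vs (k - 1) \<noteq> {} \<and>
      S 0 \<subseteq> S 1 \<and> S (k - 1) \<subseteq> S (k - 2) \<and>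
      (\<forall>i. 1 \<le> i \<and> i < k \<longrightarrow> S (i - 1) \<inter> S i \<noteq> {}) \<and>
      (\<forall>i. 1 \<le> i \<and> i < k \<longrightarrow> S (i - 1) \<noteq> S i) \<and>
      (\<forall>i. 1 \<le> i \<and> i \<le> k - 2 \<longrightarrow>
          (S i \<inter> S (i + 1)) - S 0 \<noteq> {} \<and> (S (i - 1) \<inter> S i) - S (k - 1) \<noteq> {}) \<and>
      (\<forall>i. 1 \<le> i \<and> i < k \<longrightarrow>
          (S (i - 1) \<union> Vs (i - 1)) - S i \<noteq> {} \<and> (S i \<union> Vs i) - S (i - 1) \<noteq> {}))"

text \<open>Conditions (g),(h) on a P-node ((i) holds by construction of the datatype).\<close>
definition pnode_ok :: "'v set \<Rightarrow> 'v mpq list \<Rightarrow> bool" where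
  "pnode_ok S ts \<longleftrightarrow>
     (S = {} \<longrightarrow> (\<forall>t\<in>set ts. \<forall>ts'. t \<noteq> PN {} ts')) \<and>
     \<not> (\<exists>S' ts'. ts = [PN S' ts'])"

definition mpq_tree :: "'v set \<Rightarrow> 'v set set \<Rightarrow> 'v mpq \<Rightarrow> bool" where
  "mpq_tree V E T \<longleftrightarrow>
     tree_verts T \<subseteq> V \<and>
     \<comment> \<open>every vertex is assigned to exactly one node\<close>
     (\<forall>v\<in>V. \<exists>!p. \<exists>N. subtree_at T p = Some N \<and> v \<in> node_verts N) \<and>
     \<comment> \<open>at a Q-node a vertex lies exactly in sections l..r with l < r\<close>
     (\<forall>p secs. subtree_at T p = Some (QN secs) \<longrightarrow>
        (\<forall>v\<in>node_verts (QN secs). \<exists>l r. l < r \<and> r < length secs \<and>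
            (\<forall>i<length secs. v \<in> fst (secs ! i) \<longleftrightarrow> l \<le> i \<and> i \<le> r))) \<and>
     \<comment> \<open>frontier orders = consecutive orders of the maximal cliques\<close>
     {L. is_order T L} = {L. consecutive_clique_order V E L} \<and>
     (\<forall>p secs. subtree_at T p = Some (QN secs) \<longrightarrow> qnode_ok secs) \<and>
     (\<forall>p S ts. subtree_at T p = Some (PN S ts) \<longrightarrow> pnode_ok S ts)"

end

theory Submission
  imports Defs
begin

text \<open>A non-leaf P-node owns a block of at least two entries in every frontier order: either it
  has two children, each contributing a nonempty block, or by condition (h) its only child is a
  Q-node with at least three positions. All cliques of this block contain the vertices of the
  P-node, so x and y lie in two distinct maximal cliques C1 and C2. In an interval model of
  G - xy the intervals of x and y are disjoint, and every u in C1 and v in C2 outside {x, y}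
  meets both of them, hence meets the gap between them; so u and v are adjacent, C1 \<union> C2 is a
  clique of G, and maximality forces C1 = C2.\<close>

section \<open>Interval graphs contain no induced four-cycle\<close>

lemma closed_intervals_meeting_disjoint_pair_meet:
  fixes ax bx ay by' au bu av bv :: real
  assumes "\<not> max ax ay \<le> min bx by'"
    and "max au ax \<le> min bu bx" "max au ay \<le> min bu by'"
    and "max av ax \<le> min bv bx" "max av ay \<le> min bv by'"
  shows "max au av \<le> min bu bv"
  using assms unfolding max_def min_def by (auto split: if_splits)

lemma interval_graph_common_neighbours_adjacent:
  assumes "interval_graph V E"
    and "{x, u, v, y} \<subseteq> V" "u \<noteq> v" "x \<noteq> y" "{x, y} \<notin> E"
    and "{u, x} \<in> E" "{u, y} \<in> E" "{v, x} \<in> E" "{v, y} \<in> E"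
    and "u \<notin> {x, y}" "v \<notin> {x, y}"
  shows "{u, v} \<in> E"
proof -
  from assms(1) obtain a b :: "_ \<Rightarrow> real" where
    adj: "\<forall>s\<in>V. \<forall>t\<in>V. s \<noteq> t \<longrightarrow> ({s, t} \<in> E \<longleftrightarrow> max (a s) (a t) \<le> min (b s) (b t))"
    unfolding interval_graph_def by blast
  have "x \<in> V" "y \<in> V" "u \<in> V" "v \<in> V" using assms(2) by auto
  note adj = adj[rule_format]
  have gap: "\<not> max (a x) (a y) \<le> min (b x) (b y)"
    using adj[of x y] \<open>x \<in> V\<close> \<open>y \<in> V\<close> assms(4,5) by simp
  have meet: "max (a s) (a t) \<le> min (b s) (b t)" if "s \<in> {u, v}" "t \<in> {x, y}" for s t
  proof -
    have "s \<in> V" "t \<in> V" "s \<noteq> t" "{s, t} \<in> E"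
      using that \<open>x \<in> V\<close> \<open>y \<in> V\<close> \<open>u \<in> V\<close> \<open>v \<in> V\<close> assms(6-) by auto
    then show ?thesis using adj[of s t] by simp
  qed
  have "max (a u) (a v) \<le> min (b u) (b v)"
    by (rule closed_intervals_meeting_disjoint_pair_meet[OF gap meet meet meet meet]) auto
  then show ?thesis using adj[of u v] \<open>u \<in> V\<close> \<open>v \<in> V\<close> assms(3) by simp
qed

lemma is_clique_Un:
  assumes "is_clique V E C1" "is_clique V E C2"
    and "\<And>u v. u \<in> C1 \<Longrightarrow> v \<in> C2 \<Longrightarrow> u \<noteq> v \<Longrightarrow> {u, v} \<in> E"
  shows "is_clique V E (C1 \<union> C2)"
  unfolding is_clique_def
proof (intro conjI ballI impI)
  show "C1 \<union> C2 \<subseteq> V" using assms(1,2) by (simp add: is_clique_def)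
next
  fix u v assume "u \<in> C1 \<union> C2" "v \<in> C1 \<union> C2" "u \<noteq> v"
  then consider "u \<in> C1" "v \<in> C1" | "u \<in> C2" "v \<in> C2" | "u \<in> C1" "v \<in> C2" | "v \<in> C1" "u \<in> C2"
    by blast
  then show "{u, v} \<in> E"
  proof cases
    case 4
    then have "{v, u} \<in> E" using assms(3) \<open>u \<noteq> v\<close> by simp
    then show ?thesis by (simp add: insert_commute)
  qed (use assms \<open>u \<noteq> v\<close> in \<open>auto simp: is_clique_def\<close>)
qed

lemma max_cliques_containing_interval_edge_eq:
  assumes ig: "interval_graph V (del_edge E x y)" and "x \<noteq> y"
    and C1: "C1 \<in> max_cliques V E" and C2: "C2 \<in> max_cliques V E"
    and xy: "x \<in> C1" "y \<in> C1" "x \<in> C2" "y \<in> C2"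
  shows "C1 = C2"
proof -
  have cl: "is_clique V E C1" "is_clique V E C2"
    using C1 C2 by (auto simp: max_cliques_def)
  have "C1 \<union> C2 \<subseteq> V" using cl by (simp add: is_clique_def)
  have "{u, v} \<in> E" if u: "u \<in> C1" and v: "v \<in> C2" and "u \<noteq> v" for u v
  proof (cases "u \<in> C2 \<or> v \<in> C1")
    case True
    then show ?thesis using cl \<open>u \<noteq> v\<close> u v unfolding is_clique_def by blast
  next
    case False
    then have "u \<notin> {x, y}" "v \<notin> {x, y}" using xy by auto
    have E_del: "{s, t} \<in> del_edge E x y" if "s \<noteq> t" "{s, t} \<in> E" "s \<notin> {x, y}" for s t
      using that by (auto simp: del_edge_def doubleton_eq_iff)
    have "{u, x} \<in> E" "{u, y} \<in> E" "{v, x} \<in> E" "{v, y} \<in> E"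
      using cl u v xy \<open>u \<notin> {x, y}\<close> \<open>v \<notin> {x, y}\<close> unfolding is_clique_def by auto
    then have "{u, x} \<in> del_edge E x y" "{u, y} \<in> del_edge E x y"
      "{v, x} \<in> del_edge E x y" "{v, y} \<in> del_edge E x y"
      using E_del \<open>u \<notin> {x, y}\<close> \<open>v \<notin> {x, y}\<close> by auto
    moreover have "{x, y} \<notin> del_edge E x y" by (simp add: del_edge_def)
    moreover have "{x, u, v, y} \<subseteq> V" using \<open>C1 \<union> C2 \<subseteq> V\<close> u v xy by auto
    ultimately have "{u, v} \<in> del_edge E x y"
      using interval_graph_common_neighbours_adjacent[OF ig]
        \<open>x \<noteq> y\<close> \<open>u \<noteq> v\<close> \<open>u \<notin> {x, y}\<close> \<open>v \<notin> {x, y}\<close> by blast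
    then show ?thesis by (simp add: del_edge_def)
  qed
  then have "is_clique V E (C1 \<union> C2)" by (rule is_clique_Un[OF cl])
  then show ?thesis using C1 C2 unfolding max_cliques_def by blast
qed

section \<open>Frontier orders of MPQ-trees\<close>

lemma concat_eq_append_if_mem: "xs \<in> set xss \<Longrightarrow> \<exists>pre suf. concat xss = pre @ xs @ suf"
  by (metis concat.simps(2) concat_append split_list)

lemma length_le_length_concat: "[] \<notin> set xss \<Longrightarrow> length xss \<le> length (concat xss)"
proof (induction xss)
  case (Cons xs xss)
  then have "1 \<le> length xs" by (cases xs) auto
  with Cons show ?case by simp
qed simp

lemma subtree_at_append:
  "subtree_at T p = Some N \<Longrightarrow> subtree_at T (p @ q) = subtree_at N q"
  by (induction p arbitrary: T) (auto split: option.splits)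

lemma is_order_exists: "\<exists>L. is_order T L"
proof (induction T)
  case (PN S ts)
  show ?case
  proof (cases "ts = []")
    case True
    then show ?thesis using is_order.leaf by blast
  next
    case False
    have "list_all2 is_order ts (map (\<lambda>t. SOME l. is_order t l) ts)"
      using PN by (auto simp: list_all2_conv_all_nth intro: someI_ex)
    then show ?thesis using is_order.pnode[OF False] by blast
  qed
next
  case (QN secs)
  have "\<exists>l. qslot is_order (S, t) l" if "(S, t) \<in> set secs" for S t
    using QN[OF that] by (cases t) (auto simp: qslot_def)
  then have "\<exists>ls. list_all2 (qslot is_order) secs ls"
    by (induction secs) (fastforce simp: list_all2_Cons1)+
  then show ?case using is_order.qnode by blast
qed

lemma qslot_is_order_child:
  assumes "qslot is_order (secs ! i) l" and "snd (secs ! i) = Some t"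
  obtains A l' where "is_order t l'" "l = map ((\<union>) A) l'"
  using assms by (cases "secs ! i") (auto simp: qslot_def)

lemma is_order_child:
  assumes "is_order T L" and "child T i = Some t"
  shows "\<exists>A l pre suf. is_order t l \<and> L = pre @ map ((\<union>) A) l @ suf"
  using assms(1)
proof cases
  case (leaf S)
  then show ?thesis using assms(2) by simp
next
  case (pnode ts ls ls' S)
  then have "i < length ts" "t = ts ! i" using assms(2) by (auto split: if_splits)
  then have "is_order t (ls ! i)" "ls ! i \<in> set ls'"
    using pnode mset_eq_setD[OF \<open>mset ls' = mset ls\<close>] by (auto dest: list_all2_nthD list_all2_lengthD)
  moreover obtain pre suf where "concat ls' = pre @ ls ! i @ suf"
    using concat_eq_append_if_mem[OF \<open>ls ! i \<in> set ls'\<close>] by blast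
  ultimately have "is_order t (ls ! i) \<and>
      L = map ((\<union>) S) pre @ map ((\<union>) S) (ls ! i) @ map ((\<union>) S) suf"
    using pnode by simp
  then show ?thesis by blast
next
  case (qnode secs ls)
  then have "i < length secs" "snd (secs ! i) = Some t" using assms(2) by (auto split: if_splits)
  then have "qslot is_order (secs ! i) (ls ! i)" "ls ! i \<in> set ls"
    using qnode by (auto dest: list_all2_nthD list_all2_lengthD)
  then show ?thesis using qnode
    by (metis concat_eq_append_if_mem qslot_is_order_child \<open>snd (secs ! i) = Some t\<close>)
next
  case (qnode_rev secs ls)
  then have "i < length secs" "snd (secs ! i) = Some t" using assms(2) by (auto split: if_splits)
  then have "qslot is_order (secs ! i) (ls ! i)" "ls ! i \<in> set (rev ls)"
    using qnode_rev by (auto dest: list_all2_nthD list_all2_lengthD)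
  then show ?thesis using qnode_rev
    by (metis concat_eq_append_if_mem qslot_is_order_child \<open>snd (secs ! i) = Some t\<close>)
qed

lemma is_order_subtree:
  assumes "subtree_at T p = Some N" and "is_order T L"
  shows "\<exists>A l pre suf. is_order N l \<and> L = pre @ map ((\<union>) A) l @ suf"
  using assms
proof (induction p arbitrary: T L)
  case Nil
  then have "is_order N L \<and> L = [] @ map ((\<union>) {}) L @ []" by (simp add: map_idI)
  then show ?case by blast
next
  case (Cons i p)
  then obtain t where "child T i = Some t" and t: "subtree_at t p = Some N"
    by (auto split: option.splits)
  with is_order_child[OF Cons.prems(2)] obtain A l pre suf
    where "is_order t l" "L = pre @ map ((\<union>) A) l @ suf" by blast
  moreover from Cons.IH[OF t \<open>is_order t l\<close>] obtain B l' pre' suf'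
    where "is_order N l'" "l = pre' @ map ((\<union>) B) l' @ suf'" by blast
  ultimately have "L = (pre @ map ((\<union>) A) pre') @ map ((\<union>) (A \<union> B)) l'
      @ (map ((\<union>) A) suf' @ suf)"
    by (simp add: Un_assoc)
  then show ?case using \<open>is_order N l'\<close> by blast
qed

text \<open>The frontier order of a Q-node without positions is empty; MPQ-trees have no such node.\<close>

definition qnodes_nonempty :: "'v mpq \<Rightarrow> bool" where
  "qnodes_nonempty T \<longleftrightarrow> (\<forall>q secs. subtree_at T q = Some (QN secs) \<longrightarrow> secs \<noteq> [])"

lemma qnodes_nonempty_subtree:
  "qnodes_nonempty T \<Longrightarrow> subtree_at T p = Some N \<Longrightarrow> qnodes_nonempty N"
  unfolding qnodes_nonempty_def by (metis subtree_at_append)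

lemma qnodes_nonempty_child:
  "qnodes_nonempty T \<Longrightarrow> child T i = Some t \<Longrightarrow> qnodes_nonempty t"
  using qnodes_nonempty_subtree[of T "[i]" t] by simp

lemma mpq_tree_qnode_ok: "mpq_tree V E T \<Longrightarrow> subtree_at T p = Some (QN secs) \<Longrightarrow> qnode_ok secs"
  unfolding mpq_tree_def by blast

lemma mpq_tree_pnode_ok: "mpq_tree V E T \<Longrightarrow> subtree_at T p = Some (PN S ts) \<Longrightarrow> pnode_ok S ts"
  unfolding mpq_tree_def by blast

lemma qnode_ok_length: "qnode_ok secs \<Longrightarrow> 3 \<le> length secs"
  unfolding qnode_ok_def Let_def by simp

lemma mpq_tree_qnodes_nonempty: "mpq_tree V E T \<Longrightarrow> qnodes_nonempty T"
  unfolding qnodes_nonempty_def by (metis mpq_tree_qnode_ok qnode_ok_length list.size(3) not_numeral_le_zero)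

lemma qslots_nonempty:
  assumes "list_all2 (qslot R) secs ls"
    and "\<And>i t l'. i < length secs \<Longrightarrow> snd (secs ! i) = Some t \<Longrightarrow> R t l' \<Longrightarrow> l' \<noteq> []"
  shows "[] \<notin> set ls"
proof
  assume "[] \<in> set ls"
  then obtain i where "i < length secs" "ls ! i = []"
    using list_all2_lengthD[OF assms(1)] by (metis in_set_conv_nth)
  moreover have "qslot R (secs ! i) (ls ! i)" using assms(1) \<open>i < length secs\<close> by (rule list_all2_nthD)
  ultimately show False using assms(2)
    by (cases "secs ! i") (fastforce simp: qslot_def split: option.splits)
qed

lemma qnodes_nonempty_slot:
  "qnodes_nonempty (QN secs) \<Longrightarrow> i < length secs \<Longrightarrow> snd (secs ! i) = Some t \<Longrightarrow> qnodes_nonempty t"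
  using qnodes_nonempty_child[of "QN secs" i t] by simp

lemma qnodes_nonempty_QN: "qnodes_nonempty (QN secs) \<Longrightarrow> secs \<noteq> []"
  unfolding qnodes_nonempty_def by (metis subtree_at.simps(1))

lemma is_order_nonempty: "is_order T l \<Longrightarrow> qnodes_nonempty T \<Longrightarrow> l \<noteq> []"
proof (induction rule: is_order.induct)
  case (leaf S)
  then show ?case by simp
next
  case (pnode ts ls ls' S)
  have "0 < length ts" using \<open>ts \<noteq> []\<close> by simp
  have "qnodes_nonempty (ts ! 0)"
    using qnodes_nonempty_child[OF pnode.prems, of 0] \<open>0 < length ts\<close> by simp
  moreover note list_all2_nthD[OF pnode.IH \<open>0 < length ts\<close>]
  moreover have "ls ! 0 \<in> set ls'"
    using list_all2_lengthD[OF pnode.IH] \<open>0 < length ts\<close> mset_eq_setD[OF \<open>mset ls' = mset ls\<close>]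
    by simp
  ultimately show ?case by auto
next
  case (qnode secs ls)
  have "[] \<notin> set ls"
  proof (rule qslots_nonempty[OF qnode.IH])
    fix i t l' assume "i < length secs" "snd (secs ! i) = Some t"
      and "is_order t l' \<and> (qnodes_nonempty t \<longrightarrow> l' \<noteq> [])"
    then show "l' \<noteq> []" using qnodes_nonempty_slot[OF qnode.prems] by blast
  qed
  moreover have "ls \<noteq> []"
    using qnodes_nonempty_QN[OF qnode.prems] list_all2_lengthD[OF qnode.IH] by auto
  ultimately show ?case by (metis concat_eq_Nil_conv list.set_sel(1))
next
  case (qnode_rev secs ls)
  have "[] \<notin> set ls"
  proof (rule qslots_nonempty[OF qnode_rev.IH])
    fix i t l' assume "i < length secs" "snd (secs ! i) = Some t"
      and "is_order t l' \<and> (qnodes_nonempty t \<longrightarrow> l' \<noteq> [])"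
    then show "l' \<noteq> []" using qnodes_nonempty_slot[OF qnode_rev.prems] by blast
  qed
  moreover have "ls \<noteq> []"
    using qnodes_nonempty_QN[OF qnode_rev.prems] list_all2_lengthD[OF qnode_rev.IH] by auto
  ultimately show ?case by (metis concat_eq_Nil_conv list.set_sel(1) set_rev rev_is_Nil_conv)
qed

lemma qslots_is_order_nonempty:
  assumes "list_all2 (qslot is_order) secs ls" and "qnodes_nonempty (QN secs)"
  shows "[] \<notin> set ls"
  using assms(1)
proof (rule qslots_nonempty)
  fix i t l' assume "i < length secs" "snd (secs ! i) = Some t" "is_order t l'"
  then show "l' \<noteq> []" using is_order_nonempty qnodes_nonempty_slot[OF assms(2)] by blast
qed

lemma is_order_QN_length:
  assumes "is_order (QN secs) l" and "qnodes_nonempty (QN secs)"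
  shows "length secs \<le> length l"
  using assms(1)
proof cases
  case (qnode ls)
  then show ?thesis
    using length_le_length_concat qslots_is_order_nonempty[OF _ assms(2)] list_all2_lengthD
    by metis
next
  case (qnode_rev ls)
  then show ?thesis
    using length_le_length_concat[of "rev ls"] qslots_is_order_nonempty[OF _ assms(2)] list_all2_lengthD
    by fastforce
qed

lemma is_order_PN_supset: "is_order (PN S ts) l \<Longrightarrow> C \<in> set l \<Longrightarrow> S \<subseteq> C"
  by (cases rule: is_order.cases) auto

lemma mpq_tree_inner_pnode_order_length:
  assumes mpq: "mpq_tree V E T" and P: "subtree_at T p = Some (PN S ts)" and "ts \<noteq> []"
    and "is_order (PN S ts) l"
  shows "2 \<le> length l"
  using assms(4)
proof cases
  case leaf
  then show ?thesis using \<open>ts \<noteq> []\<close> by simp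
next
  case (pnode ls ls')
  have ne: "qnodes_nonempty (PN S ts)"
    using qnodes_nonempty_subtree[OF mpq_tree_qnodes_nonempty[OF mpq] P] .
  have "[] \<notin> set ls"
  proof
    assume "[] \<in> set ls"
    then obtain j where "j < length ts" "is_order (ts ! j) []"
      using \<open>list_all2 is_order ts ls\<close>
      by (metis in_set_conv_nth list_all2_conv_all_nth)
    then show False using is_order_nonempty qnodes_nonempty_child[OF ne, of j] by fastforce
  qed
  moreover have "set ls' = set ls" "length ls' = length ts"
    using \<open>mset ls' = mset ls\<close> list_all2_lengthD[OF \<open>list_all2 is_order ts ls\<close>]
    by (auto dest: mset_eq_setD mset_eq_length)
  ultimately have len: "length ts \<le> length l"
    using length_le_length_concat[of ls'] pnode by simp
  show ?thesis
  proof (cases "2 \<le> length ts")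
    case True
    then show ?thesis using len by simp
  next
    case False
    then obtain t where "ts = [t]" using \<open>ts \<noteq> []\<close> by (cases ts) (auto simp: Suc_le_eq)
    moreover have "pnode_ok S ts" by (rule mpq_tree_pnode_ok[OF mpq P])
    ultimately obtain secs where "t = QN secs" by (cases t) (auto simp: pnode_ok_def)
    with \<open>ts = [t]\<close> have Q: "subtree_at T (p @ [0]) = Some (QN secs)"
      by (simp add: subtree_at_append[OF P])
    obtain l0 where "ls' = [l0]" "is_order t l0"
      using \<open>ts = [t]\<close> \<open>set ls' = set ls\<close> \<open>length ls' = length ts\<close> \<open>list_all2 is_order ts ls\<close>
      by (cases ls'; cases ls) auto
    have "3 \<le> length secs" by (rule qnode_ok_length[OF mpq_tree_qnode_ok[OF mpq Q]])
    also have "\<dots> \<le> length l0"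
      using is_order_QN_length \<open>is_order t l0\<close> \<open>t = QN secs\<close>
        qnodes_nonempty_child[OF ne, of 0] \<open>ts = [t]\<close> by simp
    finally show ?thesis using pnode \<open>ls' = [l0]\<close> by simp
  qed
qed

lemma mpq_tree_inner_pnode_two_max_cliques:
  assumes mpq: "mpq_tree V E T" and P: "subtree_at T p = Some (PN S ts)" and "ts \<noteq> []"
  obtains C1 C2 where "C1 \<noteq> C2" "C1 \<in> max_cliques V E" "C2 \<in> max_cliques V E" "S \<subseteq> C1" "S \<subseteq> C2"
proof -
  obtain L where "is_order T L" using is_order_exists by blast
  then have L: "consecutive_clique_order V E L" using mpq unfolding mpq_tree_def by blast
  obtain A l pre suf where l: "is_order (PN S ts) l" and L_eq: "L = pre @ map ((\<union>) A) l @ suf"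
    using is_order_subtree[OF P \<open>is_order T L\<close>] by blast
  have "2 \<le> length l"
    by (rule mpq_tree_inner_pnode_order_length[OF mpq P \<open>ts \<noteq> []\<close> l])
  then have "0 < length l" "1 < length l" by linarith+
  then have in_l: "l ! 0 \<in> set l" "l ! 1 \<in> set l" by simp_all
  have "distinct (map ((\<union>) A) l)" using L L_eq by (simp add: consecutive_clique_order_def)
  then have "A \<union> l ! 0 \<noteq> A \<union> l ! 1"
    using nth_eq_iff_index_eq[of "map ((\<union>) A) l" 0 1] \<open>0 < length l\<close> \<open>1 < length l\<close> by simp
  moreover have "A \<union> l ! 0 \<in> max_cliques V E" "A \<union> l ! 1 \<in> max_cliques V E"
    using L L_eq in_l by (auto simp: consecutive_clique_order_def)
  moreover have "S \<subseteq> A \<union> l ! 0" "S \<subseteq> A \<union> l ! 1"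
    using is_order_PN_supset[OF l] in_l by auto
  ultimately show ?thesis by (rule that)
qed

theorem mainTheorem2:
  fixes V :: "'v set" and E :: "'v set set" and T :: "'v mpq"
    and x y :: 'v and p :: "nat list" and S :: "'v set" and ts :: "'v mpq list"
  assumes "interval_graph V E"
    and "mpq_tree V E T"
    and "x \<noteq> y"
    and "subtree_at T p = Some (PN S ts)"
    and "x \<in> S" and "y \<in> S"
    and "ts \<noteq> []"
  shows "\<not> interval_graph V (del_edge E x y)"
proof
  assume G_xy: "interval_graph V (del_edge E x y)"
  obtain C1 C2 where "C1 \<noteq> C2" and C: "C1 \<in> max_cliques V E" "C2 \<in> max_cliques V E"
    and "S \<subseteq> C1" "S \<subseteq> C2"
    using mpq_tree_inner_pnode_two_max_cliques[OF assms(2,4,7)] .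
  moreover have "x \<in> C1" "y \<in> C1" "x \<in> C2" "y \<in> C2"
    using \<open>S \<subseteq> C1\<close> \<open>S \<subseteq> C2\<close> \<open>x \<in> S\<close> \<open>y \<in> S\<close> by auto
  ultimately show False
    using max_cliques_containing_interval_edge_eq[OF G_xy \<open>x \<noteq> y\<close> C] by simp
qed

end
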